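(* Let $A$ be an effect on a complex separable Hilbert space $\mathcal{H}$, $A'=I-A$, and define $\mathfrak{W}(\sigma_A):=\|A\|+\|A'\|-1$ and $\mathfrak{D}(\sigma_A):=\|AA'\|+\|I-AA'\|-1$. Then: (a) $0\le\mathfrak{W}(\sigma_A)-\mathfrak{D}(\sigma_A)\le1$; (b) $\mathfrak{W}(\sigma_A)-\mathfrak{D}(\sigma_A)=0$ if and only if $A$ is trivial; (c) $\mathfrak{W}(\sigma_A)-\mathfrak{D}(\sigma_A)=1$ if and only if $A$ is a nontrivial projection.
   Context: An effect is a selfadjoint bounded operator $A$ with $\mathbb{O}\le A\le I$; it is trivial if $A=\lambda I$ for some $\lambda\in[0,1]$; a nontrivial projection is a projection $P=P^2=P^*$ with $P\ne\mathbb{O},I$. Norms are operator norms. *)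

theory Defs
  imports "HOL-Analysis.Analysis"
begin

class complex_vector = real_vector +
  fixes scaleC :: "complex \<Rightarrow> 'a \<Rightarrow> 'a"
  assumes scaleR_scaleC: "scaleR r x = scaleC (complex_of_real r) x"
    and scaleC_add_right: "scaleC a (x + y) = scaleC a x + scaleC a y"
    and scaleC_add_left: "scaleC (a + b) x = scaleC a x + scaleC b x"
    and scaleC_scaleC: "scaleC a (scaleC b x) = scaleC (a * b) x"
    and scaleC_one: "scaleC 1 x = x"

class complex_normed_vector = complex_vector + real_normed_vector +
  assumes norm_scaleC: "norm (scaleC a x) = cmod a * norm x"

class complex_inner = complex_normed_vector +
  fixes cinner :: "'a \<Rightarrow> 'a \<Rightarrow> complex"
  assumes cinner_commute: "cinner x y = cnj (cinner y x)"
    and cinner_add_left: "cinner (x + y) z = cinner x z + cinner y z"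
    and cinner_scaleC_left: "cinner (scaleC r x) y = cnj r * cinner x y"
    and cinner_self_real_nonneg: "Im (cinner x x) = 0 \<and> 0 \<le> Re (cinner x x)"
    and cinner_eq_zero_iff: "cinner x x = 0 \<longleftrightarrow> x = 0"
    and norm_eq_sqrt_cinner: "norm x = sqrt (Re (cinner x x))"

class chilbert_space = complex_inner + complete_space

definition separable_space :: "'a::topological_space itself \<Rightarrow> bool" where
  "separable_space _ \<longleftrightarrow> (\<exists>D::'a set. countable D \<and> closure D = UNIV)"

definition bounded_clinear :: "('a::complex_normed_vector \<Rightarrow> 'b::complex_normed_vector) \<Rightarrow> bool" where
  "bounded_clinear f \<longleftrightarrow>
     (\<forall>x y. f (x + y) = f x + f y) \<and> (\<forall>c x. f (scaleC c x) = scaleC c (f x)) \<and>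
     (\<exists>K. \<forall>x. norm (f x) \<le> norm x * K)"

definition selfadjoint :: "('a::complex_inner \<Rightarrow> 'a) \<Rightarrow> bool" where
  "selfadjoint A \<longleftrightarrow> (\<forall>x y. cinner (A x) y = cinner x (A y))"

definition is_effect :: "('a::complex_inner \<Rightarrow> 'a) \<Rightarrow> bool" where
  "is_effect A \<longleftrightarrow> bounded_clinear A \<and> selfadjoint A \<and>
     (\<forall>x. 0 \<le> Re (cinner (A x) x) \<and> Re (cinner (A x) x) \<le> Re (cinner x x))"

definition trivial_effect :: "('a::complex_inner \<Rightarrow> 'a) \<Rightarrow> bool" where
  "trivial_effect A \<longleftrightarrow> (\<exists>c::real. 0 \<le> c \<and> c \<le> 1 \<and> A = (\<lambda>x. scaleC (complex_of_real c) x))"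

definition is_projection :: "('a::complex_inner \<Rightarrow> 'a) \<Rightarrow> bool" where
  "is_projection P \<longleftrightarrow> bounded_clinear P \<and> P \<circ> P = P \<and> selfadjoint P"

definition nontrivial_projection :: "('a::complex_inner \<Rightarrow> 'a) \<Rightarrow> bool" where
  "nontrivial_projection P \<longleftrightarrow> is_projection P \<and> P \<noteq> (\<lambda>x. 0) \<and> P \<noteq> id"

text \<open>Complement effect A' = I - A; norms are operator norms (onorm).\<close>
definition compl_op :: "('a::real_vector \<Rightarrow> 'a) \<Rightarrow> 'a \<Rightarrow> 'a" where
  "compl_op A = (\<lambda>x. x - A x)"

definition W_sigma :: "('a::real_normed_vector \<Rightarrow> 'a) \<Rightarrow> real" where
  "W_sigma A = onorm A + onorm (compl_op A) - 1"

definition D_sigma :: "('a::real_normed_vector \<Rightarrow> 'a) \<Rightarrow> real" where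
  "D_sigma A = onorm (A \<circ> compl_op A) + onorm (compl_op (A \<circ> compl_op A)) - 1"

end

theory Submission
  imports Defs
begin

text \<open>
  Put \<open>M = \<parallel>A\<parallel>\<close> and \<open>m = 1 - \<parallel>I - A\<parallel>\<close>; they bound the numerical range of \<open>A\<close>, and
  \<open>W = M - m\<close>. With \<open>f t = t - t\<^sup>2\<close>, the form of \<open>AA' = A - A\<^sup>2\<close> lies below the maximum of \<open>f\<close>
  on \<open>[m, M]\<close> by Cauchy-Schwarz, and above the chord of \<open>f\<close> between \<open>m\<close> and \<open>M\<close> because
  \<open>(A - m)(M - A) \<ge> 0\<close>. So \<open>D\<close> is at most the oscillation of \<open>f\<close> on \<open>[m, M]\<close>, which is
  smaller than \<open>M - m\<close> unless \<open>m = M\<close>, since \<open>f c - f e = (c - e)(1 - c - e)\<close>.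
  The triangle inequality gives \<open>D \<ge> 0\<close>; when \<open>W - D = 1\<close>, \<open>D = 0\<close> forces the form of
  \<open>AA'\<close> to be constant, hence zero, so \<open>A\<^sup>2 = A\<close>.
\<close>

definition rinner :: "'a::complex_inner \<Rightarrow> 'a \<Rightarrow> real" where
  "rinner x y = Re (cinner x y)"

lemma cinner_add_right: "cinner x (y + z) = cinner x y + cinner x z"
  by (metis cinner_add_left cinner_commute complex_cnj_add)

lemma rinner_add_left: "rinner (x + y) z = rinner x z + rinner y z"
  by (simp add: rinner_def cinner_add_left)

lemma rinner_add_right: "rinner x (y + z) = rinner x y + rinner x z"
  by (simp add: rinner_def cinner_add_right)

lemma rinner_commute: "rinner x y = rinner y x"
  unfolding rinner_def by (subst cinner_commute) simp

lemma rinner_scaleR_left: "rinner (t *\<^sub>R x) y = t * rinner x y"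
  by (simp add: rinner_def scaleR_scaleC cinner_scaleC_left)

lemma rinner_scaleR_right: "rinner x (t *\<^sub>R y) = t * rinner x y"
  by (metis rinner_commute rinner_scaleR_left)

lemma rinner_minus_left: "rinner (- x) y = - rinner x y"
  by (metis rinner_scaleR_left scaleR_minus1_left mult_minus1)

lemma rinner_minus_right: "rinner x (- y) = - rinner x y"
  by (metis rinner_commute rinner_minus_left)

lemma rinner_diff_left: "rinner (x - y) z = rinner x z - rinner y z"
  by (simp add: rinner_add_left rinner_minus_left diff_conv_add_uminus del: add_uminus_conv_diff)

lemma rinner_diff_right: "rinner x (y - z) = rinner x y - rinner x z"
  by (metis rinner_commute rinner_diff_left)

lemma rinner_self_eq_norm_sq: "rinner x x = (norm x)\<^sup>2"
  using cinner_self_real_nonneg[of x] norm_eq_sqrt_cinner[of x] by (simp add: rinner_def)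

lemmas rinner_simps = rinner_add_left rinner_add_right rinner_scaleR_left rinner_scaleR_right
  rinner_minus_left rinner_minus_right rinner_diff_left rinner_diff_right

lemma quadratic_nonneg_imp_discriminant_le:
  fixes a b c :: real
  assumes "\<And>t. 0 \<le> a + 2 * t * b + t\<^sup>2 * c"
  shows "b\<^sup>2 \<le> a * c"
proof -
  have a: "0 \<le> a" using assms[of 0] by simp
  have c: "0 \<le> c"
  proof (rule ccontr)
    assume "\<not> 0 \<le> c"
    define t where "t = sqrt ((a + 1) / - c)"
    have "t\<^sup>2 * c = - (a + 1)"
      using a \<open>\<not> 0 \<le> c\<close> by (simp add: t_def field_simps)
    moreover have "0 \<le> a + 2 * t * b + t\<^sup>2 * c" "0 \<le> a + 2 * (- t) * b + (- t)\<^sup>2 * c"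
      using assms by blast+
    ultimately show False by simp
  qed
  show ?thesis
  proof (cases "c = 0")
    case True
    have "b = 0"
    proof (rule ccontr)
      assume "b \<noteq> 0"
      have "0 \<le> a + 2 * (- (a + 1) / (2 * b)) * b + (- (a + 1) / (2 * b))\<^sup>2 * c"
        using assms by blast
      with True \<open>b \<noteq> 0\<close> show False by (simp add: field_simps)
    qed
    with True show ?thesis by simp
  next
    case False
    with c have "0 < c" by simp
    have "0 \<le> a + 2 * (- b / c) * b + (- b / c)\<^sup>2 * c" using assms by blast
    with \<open>0 < c\<close> show ?thesis by (simp add: field_simps power2_eq_square)
  qed
qed

definition symmetric_op :: "('a::complex_inner \<Rightarrow> 'a) \<Rightarrow> bool" where
  "symmetric_op B \<longleftrightarrow> (\<forall>x y. rinner (B x) y = rinner x (B y))"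

definition positive_op :: "('a::complex_inner \<Rightarrow> 'a) \<Rightarrow> bool" where
  "positive_op B \<longleftrightarrow> bounded_linear B \<and> symmetric_op B \<and> (\<forall>x. 0 \<le> rinner (B x) x)"

lemma symmetric_op_id: "symmetric_op (\<lambda>x. x)"
  by (simp add: symmetric_op_def)

lemma symmetric_op_scaleR: "symmetric_op (\<lambda>x. c *\<^sub>R x)"
  by (simp add: symmetric_op_def rinner_simps)

lemma symmetric_op_diff: "symmetric_op B \<Longrightarrow> symmetric_op C \<Longrightarrow> symmetric_op (\<lambda>x. B x - C x)"
  by (simp add: symmetric_op_def rinner_simps)

lemma symmetric_op_square: "symmetric_op B \<Longrightarrow> symmetric_op (\<lambda>x. B (B x))"
  by (simp add: symmetric_op_def)

lemma positive_op_form_nonneg: "positive_op B \<Longrightarrow> 0 \<le> rinner (B x) x"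
  by (simp add: positive_op_def)

lemma positive_op_id: "positive_op (\<lambda>x. x)"
  by (simp add: positive_op_def symmetric_op_id rinner_self_eq_norm_sq)

lemma positive_op_cauchy_schwarz:
  assumes "positive_op B"
  shows "(rinner (B x) y)\<^sup>2 \<le> rinner (B x) x * rinner (B y) y"
proof (rule quadratic_nonneg_imp_discriminant_le)
  fix t
  interpret bounded_linear B using assms by (simp add: positive_op_def)
  have "0 \<le> rinner (B (x + t *\<^sub>R y)) (x + t *\<^sub>R y)"
    using assms by (rule positive_op_form_nonneg)
  also have "\<dots> = rinner (B x) x + t * rinner (B x) y + t * rinner (B y) x + t\<^sup>2 * rinner (B y) y"
    by (simp add: add scaleR rinner_simps algebra_simps power2_eq_square)
  also have "rinner (B y) x = rinner (B x) y"
    using assms by (metis positive_op_def symmetric_op_def rinner_commute)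
  finally show "0 \<le> rinner (B x) x + 2 * t * rinner (B x) y + t\<^sup>2 * rinner (B y) y"
    by simp
qed

lemma rinner_cauchy_schwarz: "\<bar>rinner x y\<bar> \<le> norm x * norm y"
proof (rule power2_le_imp_le)
  show "\<bar>rinner x y\<bar>\<^sup>2 \<le> (norm x * norm y)\<^sup>2"
    using positive_op_cauchy_schwarz[OF positive_op_id, of x y]
    by (simp add: rinner_self_eq_norm_sq power_mult_distrib)
qed simp

lemma positive_op_form_eq_zero:
  assumes "positive_op B" and "rinner (B x) x = 0"
  shows "B x = 0"
  using positive_op_cauchy_schwarz[OF assms(1), of x "B x"] assms(2)
  by (simp add: rinner_self_eq_norm_sq)

text \<open>For \<open>0 \<le> B \<le> C\<close> one has \<open>B\<^sup>2 \<le> C B\<close>; this is the Cauchy-Schwarz inequality for the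
  form of \<open>B\<close>, evaluated at \<open>x\<close> and \<open>B x\<close>.\<close>

lemma positive_op_norm_sq_le:
  assumes B: "positive_op B" and "0 \<le> C" and form_le: "\<And>x. rinner (B x) x \<le> C * (norm x)\<^sup>2"
  shows "(norm (B x))\<^sup>2 \<le> C * rinner (B x) x"
proof (cases "B x = 0")
  case True
  then show ?thesis using \<open>0 \<le> C\<close> positive_op_form_nonneg[OF B, of x] by simp
next
  case False
  have "(rinner (B x) (B x))\<^sup>2 \<le> rinner (B x) x * rinner (B (B x)) (B x)"
    using B by (rule positive_op_cauchy_schwarz)
  also have "\<dots> \<le> rinner (B x) x * (C * (norm (B x))\<^sup>2)"
    using form_le positive_op_form_nonneg[OF B] by (rule mult_left_mono)
  finally have "(norm (B x))\<^sup>2 * (norm (B x))\<^sup>2 \<le> (C * rinner (B x) x) * (norm (B x))\<^sup>2"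
    by (simp add: rinner_self_eq_norm_sq power2_eq_square algebra_simps)
  moreover have "0 < (norm (B x))\<^sup>2" using False by simp
  ultimately show ?thesis by (metis mult_le_cancel_right_pos)
qed

lemma onorm_le_of_form_le:
  assumes "positive_op B" and "0 \<le> C" and "\<And>x. rinner (B x) x \<le> C * (norm x)\<^sup>2"
  shows "onorm B \<le> C"
proof (rule onorm_bound[OF \<open>0 \<le> C\<close>])
  fix x
  have "(norm (B x))\<^sup>2 \<le> C * rinner (B x) x" by (rule positive_op_norm_sq_le[OF assms])
  also have "\<dots> \<le> C * (C * (norm x)\<^sup>2)" using assms(2,3) by (rule mult_left_mono[rotated])
  finally have "(norm (B x))\<^sup>2 \<le> (C * norm x)\<^sup>2" by (simp add: power2_eq_square ac_simps)
  then show "norm (B x) \<le> C * norm x" by (rule power2_le_imp_le) (use \<open>0 \<le> C\<close> in simp)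
qed

lemma form_le_onorm:
  assumes "bounded_linear B"
  shows "rinner (B x) x \<le> onorm B * (norm x)\<^sup>2"
proof -
  have "rinner (B x) x \<le> norm (B x) * norm x" using rinner_cauchy_schwarz[of "B x" x] by simp
  also have "\<dots> \<le> onorm B * norm x * norm x" by (simp add: mult_right_mono onorm[OF assms])
  finally show ?thesis by (simp add: power2_eq_square)
qed

lemma compl_op_apply [simp]: "compl_op B x = x - B x"
  by (simp add: compl_op_def)

lemma bounded_linear_compl_op: "bounded_linear B \<Longrightarrow> bounded_linear (compl_op B)"
  unfolding compl_op_def by (intro bounded_linear_sub bounded_linear_ident)

lemma one_le_onorm_add_onorm_compl_op:
  fixes B :: "'a::real_normed_vector \<Rightarrow> 'a" and e :: 'a
  assumes "bounded_linear B" and "e \<noteq> 0"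
  shows "1 \<le> onorm B + onorm (compl_op B)"
proof -
  have "norm e \<le> norm (B e) + norm (compl_op B e)"
    using norm_triangle_ineq[of "B e" "e - B e"] by simp
  also have "\<dots> \<le> (onorm B + onorm (compl_op B)) * norm e"
    using onorm[OF assms(1), of e] onorm[OF bounded_linear_compl_op[OF assms(1)], of e]
    by (simp add: algebra_simps)
  finally show ?thesis using \<open>e \<noteq> 0\<close> by simp
qed

lemma one_le_onorm_idempotent:
  assumes "bounded_linear P" and "\<And>x. P (P x) = P x" and "P y \<noteq> 0"
  shows "1 \<le> onorm P"
  using onorm[OF assms(1), of "P y"] assms(2,3) by simp

lemma onorm_id_eq_one:
  fixes e :: "'a::real_normed_vector"
  assumes "e \<noteq> 0"
  shows "onorm (\<lambda>x::'a. x) = 1"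
  using onorm_id_le[where 'a='a] one_le_onorm_idempotent[OF bounded_linear_ident, of e] assms
  by simp

definition parabola :: "real \<Rightarrow> real" where
  "parabola t = t - t\<^sup>2"

definition clamp_half :: "real \<Rightarrow> real \<Rightarrow> real" where
  "clamp_half m M = (if M \<le> 1/2 then M else if 1/2 \<le> m then m else 1/2)"

lemma parabola_diff: "parabola a - parabola b = (a - b) * (1 - a - b)"
  by (simp add: parabola_def power2_eq_square algebra_simps)

lemma parabola_le_quarter: "parabola t \<le> 1/4"
proof -
  have "0 \<le> (t - 1/2)\<^sup>2" by simp
  then show ?thesis by (simp add: parabola_def power2_eq_square algebra_simps)
qed

lemma parabola_nonneg: "0 \<le> t \<Longrightarrow> t \<le> 1 \<Longrightarrow> 0 \<le> parabola t"
  by (simp add: parabola_def power2_eq_square mult_left_le)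

lemma clamp_half_mem: "m \<le> M \<Longrightarrow> clamp_half m M \<in> {m..M}"
  by (auto simp: clamp_half_def)

lemma clamp_half_unit_interval:
  "0 \<le> m \<Longrightarrow> m \<le> 1 \<Longrightarrow> 0 \<le> M \<Longrightarrow> M \<le> 1 \<Longrightarrow> clamp_half m M \<in> {0..1}"
  by (auto simp: clamp_half_def)

lemma parabola_le_clamp_half:
  assumes "t \<in> {m..M}"
  shows "parabola t \<le> parabola (clamp_half m M)"
proof -
  consider "M \<le> 1/2" | "\<not> M \<le> 1/2" "1/2 \<le> m" | "\<not> M \<le> 1/2" "\<not> 1/2 \<le> m" by blast
  then show ?thesis
  proof cases
    case 1
    have "0 \<le> (M - t) * (1 - M - t)" using 1 assms by (intro mult_nonneg_nonneg) auto
    with 1 show ?thesis using parabola_diff[of M t] by (simp add: clamp_half_def)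
  next
    case 2
    have "0 \<le> (t - m) * (t + m - 1)" using 2 assms by (intro mult_nonneg_nonneg) auto
    with 2 show ?thesis using parabola_diff[of m t] by (simp add: clamp_half_def algebra_simps)
  next
    case 3
    have "0 \<le> (t - 1/2)\<^sup>2" by simp
    with 3 show ?thesis by (simp add: clamp_half_def parabola_def power2_eq_square algebra_simps)
  qed
qed

text \<open>The right-hand side is the chord of \<open>parabola\<close> through \<open>m\<close> and \<open>M\<close>.\<close>

lemma min_parabola_le_chord:
  assumes "t \<in> {m..M}"
  shows "min (parabola m) (parabola M) \<le> (1 - M - m) * t + M * m"
proof (cases "0 \<le> 1 - M - m")
  case True
  then have "(1 - M - m) * m \<le> (1 - M - m) * t" using assms by (simp add: mult_left_mono)
  then show ?thesis by (simp add: parabola_def power2_eq_square algebra_simps min_def)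
next
  case False
  then have "(1 - M - m) * M \<le> (1 - M - m) * t" using assms by (simp add: mult_left_mono_neg)
  then show ?thesis by (simp add: parabola_def power2_eq_square algebra_simps min_def)
qed

lemma parabola_diff_less:
  assumes "0 \<le> m" "m < M" "M \<le> 1" "c \<in> {m..M}" "e \<in> {m..M}"
  shows "parabola c - parabola e < M - m"
proof (cases "\<bar>c - e\<bar> < M - m")
  case True
  have "\<bar>1 - c - e\<bar> \<le> 1" using assms by auto
  then have "\<bar>(c - e) * (1 - c - e)\<bar> \<le> \<bar>c - e\<bar>"
    unfolding abs_mult by (metis abs_ge_zero mult.right_neutral mult_left_mono)
  with True show ?thesis by (simp add: parabola_diff)
next
  case False
  then have ce: "\<bar>c - e\<bar> = M - m" and "\<bar>1 - c - e\<bar> < 1" using assms by auto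
  then have "\<bar>(c - e) * (1 - c - e)\<bar> < \<bar>c - e\<bar>"
    unfolding abs_mult using assms by (metis diff_gt_0_iff_gt mult.right_neutral mult_strict_left_mono)
  with ce show ?thesis by (simp add: parabola_diff)
qed

lemma parabola_diff_le:
  assumes "0 \<le> m" "m \<le> M" "M \<le> 1" "c \<in> {m..M}" "e \<in> {m..M}"
  shows "parabola c - parabola e \<le> M - m"
proof (cases "m = M")
  case True
  with assms show ?thesis by simp
next
  case False
  with assms show ?thesis using parabola_diff_less[of m M c e] by simp
qed

lemma parabola_oscillation_le:
  assumes "0 \<le> m" "m \<le> M" "M \<le> 1"
  shows "parabola (clamp_half m M) - min (parabola m) (parabola M) \<le> M - m"
proof -
  have "parabola (clamp_half m M) - parabola e \<le> M - m" if "e \<in> {m..M}" for e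
    using parabola_diff_le[OF assms clamp_half_mem[OF assms(2)] that] .
  then show ?thesis using assms by (simp add: min_def)
qed

lemma parabola_oscillation_less:
  assumes "0 \<le> m" "m < M" "M \<le> 1"
  shows "parabola (clamp_half m M) - min (parabola m) (parabola M) < M - m"
proof -
  have "parabola (clamp_half m M) - parabola e < M - m" if "e \<in> {m..M}" for e
    using parabola_diff_less[OF assms clamp_half_mem that] assms(2) by simp
  then show ?thesis using assms by (simp add: min_def)
qed

lemma clamp_half_same: "clamp_half m m = m"
  by (simp add: clamp_half_def)

lemma is_effect_positive_op:
  fixes A :: "'a::complex_inner \<Rightarrow> 'a"
  assumes "is_effect A"
  shows "positive_op A"
proof -
  obtain K where add: "\<And>x y. A (x + y) = A x + A y"
    and scale: "\<And>c x. A (scaleC c x) = scaleC c (A x)" and bound: "\<And>x. norm (A x) \<le> norm x * K"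
    using assms unfolding is_effect_def bounded_clinear_def by blast
  have "bounded_linear A"
    by (rule bounded_linear_intro[OF add _ bound]) (simp add: scaleR_scaleC scale)
  moreover have "symmetric_op A"
    using assms by (simp add: is_effect_def symmetric_op_def selfadjoint_def rinner_def)
  moreover have "0 \<le> rinner (A x) x" for x
    using assms by (simp add: is_effect_def rinner_def)
  ultimately show ?thesis by (simp add: positive_op_def)
qed

lemma is_effect_form_le: "is_effect A \<Longrightarrow> rinner (A x) x \<le> (norm x)\<^sup>2"
  by (metis is_effect_def rinner_def rinner_self_eq_norm_sq)

lemma form_ge_onorm_if_onorm_add_compl_le_one:
  assumes "bounded_linear B" and "onorm B + onorm (compl_op B) \<le> 1"
  shows "onorm B * (norm x)\<^sup>2 \<le> rinner (B x) x"
proof -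
  have "(norm x)\<^sup>2 - rinner (B x) x = rinner (compl_op B x) x"
    by (simp add: rinner_simps rinner_self_eq_norm_sq)
  also have "\<dots> \<le> onorm (compl_op B) * (norm x)\<^sup>2"
    using assms(1) by (intro form_le_onorm bounded_linear_compl_op)
  also have "\<dots> \<le> (1 - onorm B) * (norm x)\<^sup>2"
    using assms(2) by (intro mult_right_mono) auto
  finally show ?thesis by (simp add: algebra_simps)
qed

locale effect =
  fixes A :: "'a::complex_inner \<Rightarrow> 'a"
  assumes is_effect: "is_effect A"
begin

lemma positive: "positive_op A"
  using is_effect by (rule is_effect_positive_op)

lemma form_le: "rinner (A x) x \<le> (norm x)\<^sup>2"
  using is_effect by (rule is_effect_form_le)

sublocale A: bounded_linear A
  using positive by (simp add: positive_op_def)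

lemma symmetric: "symmetric_op A"
  using positive by (simp add: positive_op_def)

lemma rinner_compl: "rinner (x - A x) x = (norm x)\<^sup>2 - rinner (A x) x"
  by (simp add: rinner_simps rinner_self_eq_norm_sq)

lemma positive_compl: "positive_op (compl_op A)"
proof -
  have "symmetric_op (compl_op A)"
    unfolding compl_op_def by (intro symmetric_op_diff symmetric_op_id symmetric)
  then show ?thesis
    using form_le by (simp add: positive_op_def rinner_compl bounded_linear_compl_op A.bounded_linear)
qed

definition upper :: real where
  "upper = onorm A"

definition lower :: real where
  "lower = 1 - onorm (compl_op A)"

lemma W_sigma_eq: "W_sigma A = upper - lower"
  by (simp add: W_sigma_def upper_def lower_def)

lemma upper_nonneg: "0 \<le> upper"
  unfolding upper_def by (rule onorm_pos_le[OF A.bounded_linear])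

lemma upper_le_one: "upper \<le> 1"
  unfolding upper_def using positive by (rule onorm_le_of_form_le) (simp_all add: form_le)

lemma lower_nonneg: "0 \<le> lower"
proof -
  have "onorm (compl_op A) \<le> 1"
    using positive_compl
    by (rule onorm_le_of_form_le) (simp_all add: rinner_compl positive_op_form_nonneg[OF positive])
  then show ?thesis by (simp add: lower_def)
qed

lemma lower_le_one: "lower \<le> 1"
  unfolding lower_def using onorm_pos_le[OF bounded_linear_compl_op[OF A.bounded_linear]] by simp

lemma lower_le_upper:
  assumes "(e::'a) \<noteq> 0"
  shows "lower \<le> upper"
  using one_le_onorm_add_onorm_compl_op[OF A.bounded_linear assms] by (simp add: lower_def upper_def)

lemma form_le_upper: "rinner (A x) x \<le> upper * (norm x)\<^sup>2"
  unfolding upper_def by (rule form_le_onorm[OF A.bounded_linear])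

lemma lower_le_form: "lower * (norm x)\<^sup>2 \<le> rinner (A x) x"
  using form_le_onorm[OF bounded_linear_compl_op[OF A.bounded_linear], of x]
  by (simp add: lower_def rinner_compl algebra_simps)

lemma form_div_mem: "x \<noteq> 0 \<Longrightarrow> rinner (A x) x / (norm x)\<^sup>2 \<in> {lower..upper}"
  using lower_le_form[of x] form_le_upper[of x] by (simp add: field_simps)

lemma norm_sq_le_form: "(norm (A x))\<^sup>2 \<le> rinner (A x) x"
  using positive_op_norm_sq_le[OF positive zero_le_one] form_le by simp

lemma rinner_shift: "rinner (A x - lower *\<^sub>R x) x = rinner (A x) x - lower * (norm x)\<^sup>2"
  by (simp add: rinner_simps rinner_self_eq_norm_sq)

lemma positive_shift: "positive_op (\<lambda>x. A x - lower *\<^sub>R x)"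
  unfolding positive_op_def using lower_le_form
  by (auto simp: rinner_shift intro: bounded_linear_sub A.bounded_linear bounded_linear_scaleR_right
      bounded_linear_ident symmetric_op_diff symmetric symmetric_op_scaleR)

text \<open>This is \<open>(A - m)(M - A) \<ge> 0\<close>, obtained from \<open>0 \<le> A - m \<le> M - m\<close>.\<close>

lemma norm_sq_le_range_bound:
  "(norm (A x))\<^sup>2 \<le> (upper + lower) * rinner (A x) x - upper * lower * (norm x)\<^sup>2"
proof (cases "x = 0")
  case False
  let ?B = "\<lambda>x. A x - lower *\<^sub>R x"
  have "0 \<le> upper - lower" using lower_le_upper[OF False] by simp
  with positive_shift have "(norm (?B x))\<^sup>2 \<le> (upper - lower) * rinner (?B x) x"
    by (rule positive_op_norm_sq_le) (simp add: rinner_shift form_le_upper algebra_simps)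
  moreover have "(norm (?B x))\<^sup>2 = (norm (A x))\<^sup>2 - 2 * lower * rinner (A x) x + lower\<^sup>2 * (norm x)\<^sup>2"
  proof -
    have "(norm (?B x))\<^sup>2 = rinner (?B x) (?B x)" by (simp add: rinner_self_eq_norm_sq)
    also have "\<dots> = rinner (A x) (A x) - lower * rinner x (A x) - lower * rinner (A x) x
        + lower * lower * rinner x x"
      by (simp add: rinner_simps algebra_simps)
    finally show ?thesis
      using rinner_commute[of x "A x"] by (simp add: rinner_self_eq_norm_sq power2_eq_square)
  qed
  ultimately show ?thesis by (simp add: rinner_shift algebra_simps power2_eq_square)
qed (simp add: A.zero rinner_self_eq_norm_sq)

definition AA' :: "'a \<Rightarrow> 'a" where
  "AA' = A \<circ> compl_op A"

lemma AA'_apply: "AA' x = A x - A (A x)"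
  by (simp add: AA'_def A.diff)

lemma rinner_AA': "rinner (AA' x) x = rinner (A x) x - (norm (A x))\<^sup>2"
  using symmetric by (simp add: AA'_apply rinner_simps rinner_self_eq_norm_sq symmetric_op_def)

lemma D_sigma_eq: "D_sigma A = onorm AA' + onorm (compl_op AA') - 1"
  by (simp add: D_sigma_def AA'_def)

lemma bounded_linear_AA': "bounded_linear AA'"
  unfolding AA'_def comp_def by (intro bounded_linear_compose[OF A.bounded_linear]
      bounded_linear_compl_op A.bounded_linear)

lemma positive_AA': "positive_op AA'"
proof -
  have "symmetric_op AA'"
    using symmetric unfolding AA'_apply[abs_def] by (intro symmetric_op_diff symmetric_op_square)
  then show ?thesis
    using norm_sq_le_form by (simp add: positive_op_def bounded_linear_AA' rinner_AA')
qed

lemma positive_compl_AA': "positive_op (compl_op AA')"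
proof -
  have "symmetric_op (compl_op AA')"
    using positive_AA' unfolding compl_op_def
    by (intro symmetric_op_diff symmetric_op_id) (simp add: positive_op_def)
  moreover have "0 \<le> rinner (compl_op AA' x) x" for x
  proof -
    have "rinner (compl_op AA' x) x = (norm x)\<^sup>2 - rinner (A x) x + (norm (A x))\<^sup>2"
      by (simp add: rinner_simps rinner_self_eq_norm_sq rinner_AA')
    with form_le[of x] zero_le_power2[of "norm (A x)"] show ?thesis by linarith
  qed
  ultimately show ?thesis
    by (simp add: positive_op_def bounded_linear_compl_op bounded_linear_AA')
qed

lemma form_AA'_le: "rinner (AA' x) x \<le> parabola (clamp_half lower upper) * (norm x)\<^sup>2"
proof (cases "x = 0")
  case False
  define n where "n = (norm x)\<^sup>2"
  define q where "q = rinner (A x) x"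
  have "0 < n" using False by (simp add: n_def)
  have "q\<^sup>2 \<le> (norm (A x))\<^sup>2 * n"
    using rinner_cauchy_schwarz[of "A x" x] positive_op_form_nonneg[OF positive, of x]
    by (simp add: q_def n_def power_mono power_mult_distrib[symmetric])
  then have "rinner (AA' x) x \<le> n * parabola (q / n)"
    using \<open>0 < n\<close> by (simp add: rinner_AA' parabola_def q_def field_simps power2_eq_square)
  also have "\<dots> \<le> n * parabola (clamp_half lower upper)"
    using form_div_mem[OF False] \<open>0 < n\<close>
    by (intro mult_left_mono parabola_le_clamp_half) (simp_all add: q_def n_def)
  finally show ?thesis by (simp add: n_def mult.commute)
qed (simp add: rinner_AA' A.zero rinner_self_eq_norm_sq)

lemma form_AA'_ge: "min (parabola lower) (parabola upper) * (norm x)\<^sup>2 \<le> rinner (AA' x) x"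
proof (cases "x = 0")
  case False
  define n where "n = (norm x)\<^sup>2"
  define q where "q = rinner (A x) x"
  have "0 < n" using False by (simp add: n_def)
  have "min (parabola lower) (parabola upper) * n \<le> ((1 - upper - lower) * (q / n) + upper * lower) * n"
    using form_div_mem[OF False] \<open>0 < n\<close>
    by (intro mult_right_mono min_parabola_le_chord) (simp_all add: q_def n_def)
  also have "\<dots> = q - ((upper + lower) * q - upper * lower * n)"
    using \<open>0 < n\<close> by (simp add: field_simps)
  also have "\<dots> \<le> rinner (AA' x) x"
    using norm_sq_le_range_bound[of x] by (simp add: rinner_AA' q_def n_def)
  finally show ?thesis by (simp add: n_def)
qed (simp add: rinner_AA' A.zero rinner_self_eq_norm_sq)

lemma onorm_AA'_le: "onorm AA' \<le> parabola (clamp_half lower upper)"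
  using positive_AA' _ form_AA'_le
proof (rule onorm_le_of_form_le)
  show "0 \<le> parabola (clamp_half lower upper)"
    using clamp_half_unit_interval[OF lower_nonneg lower_le_one upper_nonneg upper_le_one]
    by (simp add: parabola_nonneg)
qed

lemma onorm_compl_AA'_le: "onorm (compl_op AA') \<le> 1 - min (parabola lower) (parabola upper)"
  using positive_compl_AA'
proof (rule onorm_le_of_form_le)
  show "0 \<le> 1 - min (parabola lower) (parabola upper)"
    using parabola_le_quarter[of lower] by linarith
  show "rinner (compl_op AA' x) x \<le> (1 - min (parabola lower) (parabola upper)) * (norm x)\<^sup>2" for x
    using form_AA'_ge[of x] by (simp add: rinner_simps rinner_self_eq_norm_sq algebra_simps)
qed

lemma D_sigma_nonneg:
  assumes "(e::'a) \<noteq> 0"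
  shows "0 \<le> D_sigma A"
  using one_le_onorm_add_onorm_compl_op[OF bounded_linear_AA' assms] by (simp add: D_sigma_eq)

lemma D_sigma_le:
  "D_sigma A \<le> parabola (clamp_half lower upper) - min (parabola lower) (parabola upper)"
  using onorm_AA'_le onorm_compl_AA'_le by (simp add: D_sigma_eq)

lemma onorm_AA'_le_lower:
  assumes sum_le_one: "onorm AA' + onorm (compl_op AA') \<le> 1"
  shows "onorm AA' \<le> lower"
proof -
  have "onorm (compl_op A) \<le> 1 - onorm AA'"
    using positive_compl
  proof (rule onorm_le_of_form_le)
    show "0 \<le> 1 - onorm AA'"
      using sum_le_one onorm_pos_le[OF bounded_linear_compl_op[OF bounded_linear_AA']] by simp
    show "rinner (compl_op A x) x \<le> (1 - onorm AA') * (norm x)\<^sup>2" for x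
    proof -
      have "(1 - onorm AA') * (norm x)\<^sup>2 = (norm x)\<^sup>2 - onorm AA' * (norm x)\<^sup>2"
        by (simp add: algebra_simps)
      then show ?thesis
        using form_ge_onorm_if_onorm_add_compl_le_one[OF bounded_linear_AA' sum_le_one, of x]
          rinner_AA'[of x] rinner_compl[of x] zero_le_power2[of "norm (A x)"]
        unfolding compl_op_apply by linarith
    qed
  qed
  then show ?thesis by (simp add: lower_def)
qed

lemma W_sigma_minus_D_sigma_bounds:
  assumes "(e::'a) \<noteq> 0"
  shows "0 \<le> W_sigma A - D_sigma A" and "W_sigma A - D_sigma A \<le> 1"
  using D_sigma_le D_sigma_nonneg[OF assms] lower_nonneg upper_le_one
    parabola_oscillation_le[OF lower_nonneg lower_le_upper[OF assms] upper_le_one]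
  by (simp_all add: W_sigma_eq)

lemma W_sigma_minus_D_sigma_eq_zero_iff:
  assumes "(e::'a) \<noteq> 0"
  shows "W_sigma A - D_sigma A = 0 \<longleftrightarrow> lower = upper"
proof
  assume "W_sigma A - D_sigma A = 0"
  then have "\<not> lower < upper"
    using D_sigma_le parabola_oscillation_less[OF lower_nonneg _ upper_le_one]
    by (force simp: W_sigma_eq)
  then show "lower = upper" using lower_le_upper[OF assms] by simp
next
  assume "lower = upper"
  then show "W_sigma A - D_sigma A = 0"
    using D_sigma_le D_sigma_nonneg[OF assms] by (simp add: W_sigma_eq clamp_half_same)
qed

lemma trivial_effect_iff_lower_eq_upper:
  assumes "(e::'a) \<noteq> 0"
  shows "trivial_effect A \<longleftrightarrow> lower = upper"
proof
  assume "trivial_effect A"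
  then obtain c :: real where c: "0 \<le> c" "c \<le> 1" and A_eq: "\<And>x. A x = c *\<^sub>R x"
    by (auto simp: trivial_effect_def scaleR_scaleC)
  have "upper \<le> c"
    unfolding upper_def using positive c(1)
    by (rule onorm_le_of_form_le) (simp add: A_eq rinner_simps rinner_self_eq_norm_sq)
  moreover have "onorm (compl_op A) \<le> 1 - c"
    using positive_compl
    by (rule onorm_le_of_form_le) (use c in \<open>simp_all add: rinner_compl A_eq rinner_simps
        rinner_self_eq_norm_sq algebra_simps\<close>)
  ultimately show "lower = upper" using lower_le_upper[OF assms] by (simp add: lower_def)
next
  assume "lower = upper"
  have "A x - lower *\<^sub>R x = 0" for x
    using positive_shift
  proof (rule positive_op_form_eq_zero)
    show "rinner (A x - lower *\<^sub>R x) x = 0"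
      using positive_op_form_nonneg[OF positive_shift, of x] form_le_upper[of x] \<open>lower = upper\<close>
      unfolding rinner_shift by simp
  qed
  then have "A = (\<lambda>x. scaleC (complex_of_real lower) x)"
    by (simp add: fun_eq_iff scaleR_scaleC[symmetric])
  then show "trivial_effect A"
    unfolding trivial_effect_def using lower_nonneg lower_le_one by blast
qed

lemma W_sigma_minus_D_sigma_eq_one_iff:
  assumes e: "(e::'a) \<noteq> 0"
  shows "W_sigma A - D_sigma A = 1 \<longleftrightarrow> nontrivial_projection A"
proof
  assume "W_sigma A - D_sigma A = 1"
  then have "lower = 0" "upper = 1" and "onorm AA' + onorm (compl_op AA') \<le> 1"
    using D_sigma_nonneg[OF e] lower_nonneg upper_le_one by (simp_all add: W_sigma_eq D_sigma_eq)
  then have "onorm AA' = 0"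
    using onorm_AA'_le_lower onorm_pos_le[OF bounded_linear_AA'] by force
  then have idem: "A \<circ> A = A"
    using onorm_eq_0[OF bounded_linear_AA'] by (simp add: fun_eq_iff AA'_apply)
  have "A \<noteq> (\<lambda>x. 0)" using \<open>upper = 1\<close> by (auto simp: upper_def onorm_zero)
  moreover have "A \<noteq> id"
    using \<open>lower = 0\<close> by (auto simp: lower_def compl_op_def onorm_zero)
  ultimately show "nontrivial_projection A"
    using is_effect idem by (simp add: nontrivial_projection_def is_projection_def is_effect_def)
next
  assume proj: "nontrivial_projection A"
  then have idem: "\<And>x. A (A x) = A x"
    by (simp add: nontrivial_projection_def is_projection_def fun_eq_iff)
  obtain y z where "A y \<noteq> 0" "A z \<noteq> z"
    using proj by (auto simp: nontrivial_projection_def fun_eq_iff)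
  then have "1 \<le> onorm A" "1 \<le> onorm (compl_op A)"
    using one_le_onorm_idempotent[OF A.bounded_linear idem]
      one_le_onorm_idempotent[OF bounded_linear_compl_op[OF A.bounded_linear], of z]
    by (simp_all add: idem A.diff)
  then have "W_sigma A = 1"
    using upper_le_one lower_nonneg by (simp add: W_sigma_eq upper_def lower_def)
  moreover have "AA' = (\<lambda>x. 0)" by (simp add: fun_eq_iff AA'_apply idem)
  moreover note onorm_id_eq_one[OF e]
  ultimately show "W_sigma A - D_sigma A = 1"
    by (simp add: D_sigma_eq compl_op_def onorm_zero)
qed

end

lemma W_sigma_minus_D_sigma_zero_space:
  fixes A :: "'a::complex_inner \<Rightarrow> 'a"
  assumes "\<And>x::'a. x = 0"
  shows "W_sigma A - D_sigma A = 0" and "trivial_effect A" and "\<not> nontrivial_projection A"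
proof -
  have all_zero: "f = (\<lambda>x. 0)" for f :: "'a \<Rightarrow> 'a" using assms by (simp add: fun_eq_iff)
  show "W_sigma A - D_sigma A = 0"
    by (simp add: W_sigma_def D_sigma_def all_zero[of A] all_zero[of "compl_op _"] onorm_zero)
  have "A = (\<lambda>x. scaleC (complex_of_real 0) x)" using all_zero by metis
  then show "trivial_effect A" unfolding trivial_effect_def by auto
  show "\<not> nontrivial_projection A"
    using all_zero[of A] by (simp add: nontrivial_projection_def)
qed

theorem mainTheorem9:
  fixes A :: "'a::chilbert_space \<Rightarrow> 'a"
  assumes "separable_space TYPE('a)"
    and "is_effect A"
  shows "(0 \<le> W_sigma A - D_sigma A \<and> W_sigma A - D_sigma A \<le> 1)
    \<and> (W_sigma A - D_sigma A = 0 \<longleftrightarrow> trivial_effect A)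
    \<and> (W_sigma A - D_sigma A = 1 \<longleftrightarrow> nontrivial_projection A)"
proof (cases "\<exists>e::'a. e \<noteq> 0")
  case False
  then show ?thesis using W_sigma_minus_D_sigma_zero_space[of A] by auto
next
  case True
  then obtain e :: 'a where e: "e \<noteq> 0" by blast
  interpret effect A using assms(2) by (rule effect.intro)
  show ?thesis
    using W_sigma_minus_D_sigma_bounds[OF e] W_sigma_minus_D_sigma_eq_zero_iff[OF e]
      trivial_effect_iff_lower_eq_upper[OF e] W_sigma_minus_D_sigma_eq_one_iff[OF e]
    by simp
qed

end
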